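(* Let $\mathfrak v$ be an irreducible $C(m)$-module and $\mathfrak n=\mathfrak v\oplus\mathbb R^m$ the associated Lie algebra of Heisenberg type. Then every proper $C^+(m)$-submodule of $\mathfrak v$ (i.e. one that is non-zero and different from $\mathfrak v$) is a Lagrangian subspace of $\mathfrak v$.
   Context: $C(m)$ is the real Clifford algebra of $\mathbb R^m$ with relations $z^2=-\langle z,z\rangle1$ and $C^+(m)$ its even subalgebra, generated by products of two elements of $\mathbb R^m$. $\mathfrak v$ carries an inner product making each $J_z$ skew-symmetric, and $\mathfrak n=\mathfrak v\oplus\mathbb R^m$ has $\mathbb R^m$ central and bracket $\langle z,[u,v]\rangle=(J_zu,v)$. A Lagrangian subspace is a subspace $\mathcal L\subset\mathfrak v$ with $[\mathcal L,\mathcal L]=0$ and $\dim\mathcal L=\frac12\dim\mathfrak v$. *)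

theory Defs
  imports "HOL-Analysis.Analysis"
begin

text \<open>A Clifford module structure of C(m) on the real inner product space 'v, with
  R^m modelled by the Euclidean space 'z: a map J linear in z, with
  J_z^2 = -<z,z> id and each J_z skew-symmetric.\<close>
definition clifford_module :: "('z::euclidean_space \<Rightarrow> 'v::euclidean_space \<Rightarrow> 'v) \<Rightarrow> bool" where
  "clifford_module J \<longleftrightarrow>
     (\<forall>z. linear (J z)) \<and> (\<forall>u. linear (\<lambda>z. J z u)) \<and>
     (\<forall>z u. J z (J z u) = - (z \<bullet> z) *\<^sub>R u) \<and>
     (\<forall>z u w. J z u \<bullet> w = - (u \<bullet> J z w))"

text \<open>C(m)-submodule: subspace invariant under all J_z (which generate C(m)).\<close>
definition cliff_submodule :: "('z::euclidean_space \<Rightarrow> 'v::euclidean_space \<Rightarrow> 'v) \<Rightarrow> 'v set \<Rightarrow> bool" where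
  "cliff_submodule J W \<longleftrightarrow> subspace W \<and> (\<forall>z. \<forall>u\<in>W. J z u \<in> W)"

definition irreducible_cliff_module :: "('z::euclidean_space \<Rightarrow> 'v::euclidean_space \<Rightarrow> 'v) \<Rightarrow> bool" where
  "irreducible_cliff_module J \<longleftrightarrow> clifford_module J \<and> (UNIV::'v set) \<noteq> {0} \<and>
     (\<forall>W. cliff_submodule J W \<longrightarrow> W = {0} \<or> W = UNIV)"

text \<open>C^+(m)-submodule: subspace invariant under all products J_z J_w (which generate C^+(m)).\<close>
definition even_cliff_submodule :: "('z::euclidean_space \<Rightarrow> 'v::euclidean_space \<Rightarrow> 'v) \<Rightarrow> 'v set \<Rightarrow> bool" where
  "even_cliff_submodule J W \<longleftrightarrow> subspace W \<and> (\<forall>z w. \<forall>u\<in>W. J z (J w u) \<in> W)"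

text \<open>The Lie bracket of n = v + R^m restricted to v: the unique [u,v] in R^m with
  <z,[u,v]> = (J_z u, v) for all z.\<close>
definition heis_bracket :: "('z::euclidean_space \<Rightarrow> 'v::euclidean_space \<Rightarrow> 'v) \<Rightarrow> 'v \<Rightarrow> 'v \<Rightarrow> 'z" where
  "heis_bracket J u v = (\<Sum>b\<in>Basis. (J b u \<bullet> v) *\<^sub>R b)"

definition lagrangian :: "('z::euclidean_space \<Rightarrow> 'v::euclidean_space \<Rightarrow> 'v) \<Rightarrow> 'v set \<Rightarrow> bool" where
  "lagrangian J L \<longleftrightarrow> subspace L \<and> (\<forall>u\<in>L. \<forall>w\<in>L. heis_bracket J u w = 0) \<and>
     2 * dim L = DIM('v)"

end

theory Submission
  imports Defs
begin

(*
  The orthogonal complement of a C^+(m)-submodule W is again one, so the orthogonal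
  projection p onto W commutes with C^+(m).  For a unit vector b the symmetric operator
  p - J_b p J_b commutes with every J_z, hence is a scalar c by Schur's lemma.  For w in W
  this makes J_b p J_b w = (1 - c) w a vector of W inside J_b W.  But W and J_b W meet only
  in 0, since their intersection is J_b-invariant and thus a C(m)-submodule.  So p J_b w = 0,
  i.e. J_b W is orthogonal to W, which kills the bracket on W; applying this to W and to its
  orthogonal complement also gives dim W = dim W^perp.
*)

lemma nonpos_if_linear_le_quadratic:
  fixes a b :: real
  assumes "\<And>t. 0 < t \<Longrightarrow> 2 * t * a \<le> t\<^sup>2 * b"
  shows "a \<le> 0"
proof (rule ccontr)
  assume "\<not> a \<le> 0"
  define t where "t = a / (\<bar>b\<bar> + 1)"
  have "0 < t" using \<open>\<not> a \<le> 0\<close> by (simp add: t_def)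
  then have "2 * a \<le> t * b" using assms[of t] by (simp add: power2_eq_square)
  also have "t * b \<le> t * \<bar>b\<bar>" using \<open>0 < t\<close> by (simp add: mult_left_mono)
  also have "\<dots> < a" using \<open>\<not> a \<le> 0\<close> by (simp add: t_def field_simps)
  finally show False using \<open>\<not> a \<le> 0\<close> by simp
qed

lemma positive_symmetric_zero_form_imp_zero:
  fixes g :: "'a::real_inner \<Rightarrow> 'a"
  assumes "linear g" and sym: "\<And>x y. g x \<bullet> y = x \<bullet> g y"
    and pos: "\<And>x. 0 \<le> g x \<bullet> x" and "g v \<bullet> v = 0"
  shows "g v = 0"
proof -
  have "2 * t * (g v \<bullet> g v) \<le> t\<^sup>2 * (g (g v) \<bullet> g v)" for t
  proof -
    have "g (v - t *\<^sub>R g v) \<bullet> (v - t *\<^sub>R g v)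
        = g v \<bullet> v - 2 * t * (g v \<bullet> g v) + t\<^sup>2 * (g (g v) \<bullet> g v)"
      using sym[of "g v" v] \<open>linear g\<close>
      by (simp add: linear_diff linear_scale inner_commute power2_eq_square algebra_simps)
    then show ?thesis using pos[of "v - t *\<^sub>R g v"] \<open>g v \<bullet> v = 0\<close> by simp
  qed
  then have "g v \<bullet> g v \<le> 0" by (rule nonpos_if_linear_le_quadratic)
  then show ?thesis by (metis antisym inner_ge_zero inner_eq_zero_iff)
qed

lemma symmetric_linear_has_eigenvector:
  fixes f :: "'a::euclidean_space \<Rightarrow> 'a"
  assumes "linear f" and sym: "\<And>x y. f x \<bullet> y = x \<bullet> f y"
  obtains v c where "v \<noteq> 0" and "f v = c *\<^sub>R v"
proof -
  have "continuous_on (sphere 0 1) (\<lambda>x. f x \<bullet> x)"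
    using \<open>linear f\<close> by (intro continuous_intros) (simp add: linear_continuous_on linear_linear)
  moreover have "sphere (0::'a) 1 \<noteq> {}" by simp
  ultimately obtain v where v: "v \<in> sphere 0 1" and max: "\<And>y. y \<in> sphere 0 1 \<Longrightarrow> f y \<bullet> y \<le> f v \<bullet> v"
    using continuous_attains_sup[OF compact_sphere] by blast
  define c where "c = f v \<bullet> v"
  define g where "g x = c *\<^sub>R x - f x" for x
  have "linear g"
    unfolding g_def using \<open>linear f\<close>
    by (intro linearI) (simp_all add: linear_add linear_scale algebra_simps)
  moreover have "g x \<bullet> y = x \<bullet> g y" for x y
    unfolding g_def using sym by (simp add: inner_diff_left inner_diff_right inner_commute)
  moreover have "0 \<le> g x \<bullet> x" for x
  proof (cases "x = 0")
    case False
    have "f (x /\<^sub>R norm x) \<bullet> (x /\<^sub>R norm x) \<le> c"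
      using max[of "x /\<^sub>R norm x"] False by (simp add: c_def)
    then have "f x \<bullet> x \<le> c * (x \<bullet> x)"
      using False \<open>linear f\<close>
      by (simp add: linear_scale divide_simps power2_norm_eq_inner[symmetric] flip: power2_eq_square)
    then show ?thesis by (simp add: g_def inner_diff_left)
  qed (use \<open>linear g\<close> in \<open>simp add: linear_0\<close>)
  moreover have "g v \<bullet> v = 0"
    using v by (simp add: g_def c_def inner_diff_left dot_square_norm)
  ultimately have "g v = 0" by (rule positive_symmetric_zero_form_imp_zero)
  then show thesis using v that[of v c] by (force simp: g_def)
qed

definition orthogonal_projection :: "'a::euclidean_space set \<Rightarrow> 'a \<Rightarrow> 'a" where
  "orthogonal_projection U x = (THE y. y \<in> U \<and> x - y \<in> U\<^sup>\<bottom>)"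

context
  fixes U :: "'a::euclidean_space set"
  assumes U: "subspace U"
begin

lemma orthogonal_projection_eqI:
  assumes "y \<in> U" and "x - y \<in> U\<^sup>\<bottom>"
  shows "orthogonal_projection U x = y"
  unfolding orthogonal_projection_def
proof (rule the_equality)
  fix y' assume y': "y' \<in> U \<and> x - y' \<in> U\<^sup>\<bottom>"
  have "y - y' = (x - y') - (x - y)" by simp
  then have "y - y' \<in> U \<inter> U\<^sup>\<bottom>"
    using assms y' U subspace_orthogonal_comp by (metis IntI subspace_diff)
  then show "y' = y" using orthogonal_Int_0[OF U] by simp
qed (use assms in simp)

lemma orthogonal_projection_id: "x \<in> U \<Longrightarrow> orthogonal_projection U x = x"
  by (simp add: orthogonal_projection_eqI subspace_0 subspace_orthogonal_comp)

lemma orthogonal_projection_in: "orthogonal_projection U x \<in> U"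
  and orthogonal_projection_diff_in: "x - orthogonal_projection U x \<in> U\<^sup>\<bottom>"
proof -
  obtain y z where "y \<in> U" "z \<in> U\<^sup>\<bottom>" "x = y + z"
    using subspace_sum_orthogonal_comp[OF U] by (metis UNIV_I set_plus_elim)
  then have "orthogonal_projection U x = y"
    by (intro orthogonal_projection_eqI) simp_all
  with \<open>y \<in> U\<close> \<open>z \<in> U\<^sup>\<bottom>\<close> \<open>x = y + z\<close>
  show "orthogonal_projection U x \<in> U" "x - orthogonal_projection U x \<in> U\<^sup>\<bottom>" by simp_all
qed

lemma linear_orthogonal_projection: "linear (orthogonal_projection U)"
proof (rule linearI)
  fix x y
  have "(x - orthogonal_projection U x) + (y - orthogonal_projection U y) \<in> U\<^sup>\<bottom>"
    by (intro subspace_add subspace_orthogonal_comp orthogonal_projection_diff_in)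
  then show "orthogonal_projection U (x + y) = orthogonal_projection U x + orthogonal_projection U y"
    by (intro orthogonal_projection_eqI)
      (simp_all add: U orthogonal_projection_in subspace_add algebra_simps)
next
  fix c :: real and x
  have "c *\<^sub>R (x - orthogonal_projection U x) \<in> U\<^sup>\<bottom>"
    by (intro subspace_scale subspace_orthogonal_comp orthogonal_projection_diff_in)
  then show "orthogonal_projection U (c *\<^sub>R x) = c *\<^sub>R orthogonal_projection U x"
    by (intro orthogonal_projection_eqI)
      (simp_all add: U orthogonal_projection_in subspace_scale algebra_simps)
qed

lemma orthogonal_projection_symmetric:
  "orthogonal_projection U x \<bullet> y = x \<bullet> orthogonal_projection U y"
proof -
  have "orthogonal_projection U x \<bullet> (y - orthogonal_projection U y) = 0"
    and "orthogonal_projection U y \<bullet> (x - orthogonal_projection U x) = 0"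
    using orthogonal_projection_in orthogonal_projection_diff_in
    by (auto simp: orthogonal_comp_def orthogonal_def)
  then show ?thesis by (simp add: inner_diff_right inner_commute)
qed

lemma orthogonal_projection_commute:
  assumes "linear f" and "f ` U \<subseteq> U" and "f ` (U\<^sup>\<bottom>) \<subseteq> U\<^sup>\<bottom>"
  shows "orthogonal_projection U (f x) = f (orthogonal_projection U x)"
proof (rule orthogonal_projection_eqI)
  show "f (orthogonal_projection U x) \<in> U"
    using assms(2) orthogonal_projection_in[of x] by blast
  have "f (x - orthogonal_projection U x) \<in> U\<^sup>\<bottom>"
    using assms(3) orthogonal_projection_diff_in[of x] by blast
  then show "f x - f (orthogonal_projection U x) \<in> U\<^sup>\<bottom>"
    using assms(1) by (simp add: linear_diff)
qed

lemma dim_orthogonal_comp: "dim (U\<^sup>\<bottom>) + dim U = DIM('a)"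
  using dim_subspace_orthogonal_to_vectors[OF U subspace_UNIV]
  by (simp add: orthogonal_comp_def)

end

context
  fixes J :: "'z::euclidean_space \<Rightarrow> 'v::euclidean_space \<Rightarrow> 'v"
  assumes J: "clifford_module J"
begin

lemma linear_J: "linear (J z)"
  using J by (simp add: clifford_module_def)

lemma J_skew: "J z u \<bullet> w = - (u \<bullet> J z w)"
  using J by (simp add: clifford_module_def)

lemma J_unit_square: "norm b = 1 \<Longrightarrow> J b (J b u) = - u"
  using J by (simp add: clifford_module_def dot_square_norm)

lemma inj_J_unit: "norm b = 1 \<Longrightarrow> inj (J b)"
  by (metis J_unit_square injI minus_equation_iff)

lemma even_cliff_submodule_orthogonal_comp:
  assumes W: "even_cliff_submodule J W"
  shows "even_cliff_submodule J (W\<^sup>\<bottom>)"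
  unfolding even_cliff_submodule_def
proof (intro conjI allI ballI subspace_orthogonal_comp)
  fix z w u assume u: "u \<in> W\<^sup>\<bottom>"
  have "y \<bullet> J z (J w u) = 0" if "y \<in> W" for y
  proof -
    have "y \<bullet> J z (J w u) = J w (J z y) \<bullet> u" by (simp add: J_skew)
    also have "\<dots> = 0"
      using W u \<open>y \<in> W\<close> by (simp add: even_cliff_submodule_def orthogonal_comp_def orthogonal_def)
    finally show ?thesis .
  qed
  then show "J z (J w u) \<in> W\<^sup>\<bottom>" by (simp add: orthogonal_comp_def orthogonal_def)
qed

lemma even_cliff_submodule_image:
  assumes W: "even_cliff_submodule J W" and b: "norm b = 1"
  shows "even_cliff_submodule J (J b ` W)"
  unfolding even_cliff_submodule_def
proof (intro conjI allI ballI)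
  show "subspace (J b ` W)"
    using W linear_subspace_image[OF linear_J] by (simp add: even_cliff_submodule_def)
  fix z w u assume "u \<in> J b ` W"
  then obtain y where y: "y \<in> W" "u = J b y" by blast
  \<comment> \<open>\<open>J\<^sub>z J\<^sub>w J\<^sub>b = - J\<^sub>b (J\<^sub>b J\<^sub>z) (J\<^sub>w J\<^sub>b)\<close>, a product of two even elements behind \<open>J\<^sub>b\<close>\<close>
  have "J b (J z (J w (J b y))) \<in> W"
    using W y by (simp add: even_cliff_submodule_def)
  then have "- J b (J z (J w u)) \<in> W"
    using W y by (simp add: even_cliff_submodule_def subspace_neg)
  moreover have "J z (J w u) = J b (- J b (J z (J w u)))"
    using b linear_J by (simp add: J_unit_square linear_neg)
  ultimately show "J z (J w u) \<in> J b ` W" by blast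
qed

lemma cliff_submodule_if_even_and_invariant:
  assumes W: "even_cliff_submodule J W" and b: "norm b = 1" and inv: "J b ` W \<subseteq> W"
  shows "cliff_submodule J W"
  unfolding cliff_submodule_def
proof (intro conjI allI ballI)
  show "subspace W" using W by (simp add: even_cliff_submodule_def)
  fix z u assume "u \<in> W"
  then have "J z (J b (J b u)) \<in> W"
    using W inv by (auto simp: even_cliff_submodule_def)
  then have "- J z u \<in> W"
    using b linear_J by (simp add: J_unit_square linear_neg)
  then show "J z u \<in> W"
    using W by (metis even_cliff_submodule_def minus_minus subspace_neg)
qed

lemma orthogonal_projection_commute_even:
  assumes W: "even_cliff_submodule J W"
  shows "orthogonal_projection W (J z (J w x)) = J z (J w (orthogonal_projection W x))"
proof -
  have "even_cliff_submodule J (W\<^sup>\<bottom>)"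
    using W by (rule even_cliff_submodule_orthogonal_comp)
  then have "orthogonal_projection W ((J z \<circ> J w) x) = (J z \<circ> J w) (orthogonal_projection W x)"
    using W by (intro orthogonal_projection_commute linear_compose linear_J)
      (auto simp: even_cliff_submodule_def)
  then show ?thesis by simp
qed

lemma dim_image_J_unit: "norm b = 1 \<Longrightarrow> dim (J b ` S) = dim S"
  by (intro dim_image_eq linear_J inj_on_subset[OF inj_J_unit]) simp_all

context
  assumes irreducible: "\<forall>S. cliff_submodule J S \<longrightarrow> S = {0} \<or> S = UNIV"
begin

lemma symmetric_commuting_map_is_scalar:
  assumes A: "linear A" and sym: "\<And>x y. A x \<bullet> y = x \<bullet> A y"
    and comm: "\<And>z x. A (J z x) = J z (A x)"
  obtains c where "\<And>x. A x = c *\<^sub>R x"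
proof -
  obtain v c where "v \<noteq> 0" and "A v = c *\<^sub>R v"
    using symmetric_linear_has_eigenvector[OF A sym] by blast
  have "cliff_submodule J {x. A x = c *\<^sub>R x}"
    unfolding cliff_submodule_def subspace_def
    using A comm linear_J by (auto simp: linear_0 linear_add linear_scale algebra_simps)
  then have "{x. A x = c *\<^sub>R x} = UNIV"
    using irreducible \<open>v \<noteq> 0\<close> \<open>A v = c *\<^sub>R v\<close> by blast
  then show thesis using that by blast
qed

lemma even_cliff_submodule_Int_image:
  assumes W: "even_cliff_submodule J W" and "W \<noteq> UNIV" and b: "norm b = 1"
  shows "W \<inter> J b ` W = {0}"
proof -
  have "even_cliff_submodule J (W \<inter> J b ` W)"
    using W even_cliff_submodule_image[OF W b]
    by (auto simp: even_cliff_submodule_def subspace_inter)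
  moreover have "J b ` (W \<inter> J b ` W) \<subseteq> W \<inter> J b ` W"
  proof clarify
    fix y assume "y \<in> W" "J b y \<in> W"
    have "J b (J b y) \<in> W"
      using W b \<open>y \<in> W\<close> by (simp add: J_unit_square even_cliff_submodule_def subspace_neg)
    moreover have "J b (J b y) \<in> J b ` W"
      using \<open>J b y \<in> W\<close> by blast
    ultimately show "J b (J b y) \<in> W \<inter> J b ` W" by blast
  qed
  ultimately have "W \<inter> J b ` W = {0} \<or> W \<inter> J b ` W = UNIV"
    using irreducible cliff_submodule_if_even_and_invariant[OF _ b] by blast
  then show ?thesis using \<open>W \<noteq> UNIV\<close> by blast
qed

lemma even_cliff_submodule_image_orthogonal:
  assumes W: "even_cliff_submodule J W" and "W \<noteq> UNIV" and b: "norm b = 1"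
  shows "J b ` W \<subseteq> W\<^sup>\<bottom>"
proof -
  have subW: "subspace W" using W by (simp add: even_cliff_submodule_def)
  note p_commute = orthogonal_projection_commute_even[OF W]
  let ?p = "orthogonal_projection W"
  \<comment> \<open>the sum of the orthogonal projections onto \<open>W\<close> and \<open>J\<^sub>b W\<close>, as \<open>J\<^sub>b\<^sup>-\<^sup>1 = - J\<^sub>b\<close>\<close>
  define A where "A x = ?p x - J b (?p (J b x))" for x
  have "linear A"
    unfolding A_def using linear_orthogonal_projection[OF subW] linear_J
    by (intro linearI) (simp_all add: linear_add linear_scale algebra_simps)
  moreover have "A x \<bullet> y = x \<bullet> A y" for x y
    unfolding A_def using orthogonal_projection_symmetric[OF subW]
    by (simp add: inner_diff_left inner_diff_right J_skew)
  moreover have "A (J z x) = J z (A x)" for z x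
  proof -
    have "J b (?p (J b (J z x))) = - J z (?p x)"
      using p_commute b by (simp add: J_unit_square)
    moreover have "J z (J b (?p (J b x))) = - ?p (J z x)"
      using p_commute[of z b "J b x"] b linear_J linear_orthogonal_projection[OF subW]
      by (simp add: J_unit_square linear_neg)
    ultimately show ?thesis
      unfolding A_def using linear_J by (simp add: linear_diff)
  qed
  ultimately obtain c where c: "\<And>x. A x = c *\<^sub>R x"
    using symmetric_commuting_map_is_scalar by blast
  show ?thesis
  proof clarify
    fix w assume "w \<in> W"
    have "J b (?p (J b w)) = (1 - c) *\<^sub>R w"
      using c[of w] orthogonal_projection_id[OF subW \<open>w \<in> W\<close>] by (simp add: A_def algebra_simps)
    moreover have "J b (?p (J b w)) \<in> J b ` W"
      using orthogonal_projection_in[OF subW] by blast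
    ultimately have "J b (?p (J b w)) \<in> W \<inter> J b ` W"
      using \<open>w \<in> W\<close> subW by (simp add: subspace_scale)
    then have "J b (?p (J b w)) = 0"
      using even_cliff_submodule_Int_image[OF W \<open>W \<noteq> UNIV\<close> b] by blast
    then have "?p (J b w) = 0"
      using inj_J_unit[OF b] linear_J by (metis injD linear_0)
    then show "J b w \<in> W\<^sup>\<bottom>"
      using orthogonal_projection_diff_in[OF subW, of "J b w"] by simp
  qed
qed

end

end

theorem theorem4p7:
  fixes J :: "'z::euclidean_space \<Rightarrow> 'v::euclidean_space \<Rightarrow> 'v"
    and W :: "'v set"
  assumes "irreducible_cliff_module J"
    and "even_cliff_submodule J W"
    and "W \<noteq> {0}"
    and "W \<noteq> UNIV"
  shows "lagrangian J W"
proof -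
  have J: "clifford_module J"
    and irreducible: "\<forall>S. cliff_submodule J S \<longrightarrow> S = {0} \<or> S = UNIV"
    using assms(1) by (simp_all add: irreducible_cliff_module_def)
  have subW: "subspace W" using assms(2) by (simp add: even_cliff_submodule_def)
  have "W\<^sup>\<bottom> \<noteq> UNIV"
    using assms(3) orthogonal_comp_self[OF subW] by force
  have J_W: "J b ` W \<subseteq> W\<^sup>\<bottom>" and J_W_perp: "J b ` (W\<^sup>\<bottom>) \<subseteq> W" if "norm b = 1" for b
    using even_cliff_submodule_image_orthogonal[OF J irreducible _ _ that]
      even_cliff_submodule_orthogonal_comp[OF J] orthogonal_comp_self[OF subW]
      assms(2,4) \<open>W\<^sup>\<bottom> \<noteq> UNIV\<close> by metis+
  have "heis_bracket J u w = 0" if "u \<in> W" "w \<in> W" for u w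
  proof -
    have "J b u \<bullet> w = 0" if "b \<in> Basis" for b
      using J_W[of b] \<open>b \<in> Basis\<close> \<open>u \<in> W\<close> \<open>w \<in> W\<close>
      by (auto simp: orthogonal_comp_def orthogonal_def inner_commute)
    then show ?thesis by (simp add: heis_bracket_def)
  qed
  moreover have "dim W = dim (W\<^sup>\<bottom>)"
  proof -
    obtain b :: 'z where "norm b = 1" using norm_Basis nonempty_Basis by blast
    then show ?thesis
      using J_W J_W_perp dim_subset dim_image_J_unit[OF J] by (metis antisym)
  qed
  ultimately show ?thesis
    using dim_orthogonal_comp[OF subW] subW by (simp add: lagrangian_def)
qed

end
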